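(* Let $S$ be a $\Gamma$-AG$^{**}$-groupoid. Then $S$ is intra-regular if and only if every right $\Gamma$-ideal of $S$ is $\Gamma$-semiprime.
   Context: Let $S$ and $\Gamma$ be nonempty sets with a map $S\times\Gamma\times S\to S$, $(x,\gamma,y)\mapsto x\gamma y$. $S$ is a $\Gamma$-AG-groupoid if $(x\gamma y)\delta z=(z\gamma y)\delta x$ for all $x,y,z\in S$, $\gamma,\delta\in\Gamma$; it is a $\Gamma$-AG$^{**}$-groupoid if moreover $a\alpha(b\beta c)=b\alpha(a\beta c)$ for all $a,b,c\in S$, $\alpha,\beta\in\Gamma$. For subsets $A,B\subseteq S$, $A\Gamma B=\{a\gamma b: a\in A,\gamma\in\Gamma,b\in B\}$. $S$ is intra-regular if for every $a\in S$ there exist $x,y\in S$ and $\beta,\gamma,\delta\in\Gamma$ with $a=(x\beta(a\delta a))\gamma y$. A nonempty subset $R$ is a right $\Gamma$-ideal if $R\Gamma S\subseteq R$. A subset $P\subseteq S$ is $\Gamma$-semiprime if for every $a\in S$, $a\Gamma a\subseteq P$ implies $a\in P$. *)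

theory Defs
  imports Main
begin

definition gamma_groupoid :: "'a set \<Rightarrow> 'g set \<Rightarrow> ('a \<Rightarrow> 'g \<Rightarrow> 'a \<Rightarrow> 'a) \<Rightarrow> bool" where
  "gamma_groupoid S Gam m \<longleftrightarrow> S \<noteq> {} \<and> Gam \<noteq> {} \<and>
     (\<forall>x\<in>S. \<forall>g\<in>Gam. \<forall>y\<in>S. m x g y \<in> S)"

definition gamma_AG_groupoid :: "'a set \<Rightarrow> 'g set \<Rightarrow> ('a \<Rightarrow> 'g \<Rightarrow> 'a \<Rightarrow> 'a) \<Rightarrow> bool" where
  "gamma_AG_groupoid S Gam m \<longleftrightarrow> gamma_groupoid S Gam m \<and>
     (\<forall>x\<in>S. \<forall>y\<in>S. \<forall>z\<in>S. \<forall>g\<in>Gam. \<forall>d\<in>Gam. m (m x g y) d z = m (m z g y) d x)"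

definition gamma_AG2_groupoid :: "'a set \<Rightarrow> 'g set \<Rightarrow> ('a \<Rightarrow> 'g \<Rightarrow> 'a \<Rightarrow> 'a) \<Rightarrow> bool" where
  "gamma_AG2_groupoid S Gam m \<longleftrightarrow> gamma_AG_groupoid S Gam m \<and>
     (\<forall>a\<in>S. \<forall>b\<in>S. \<forall>c\<in>S. \<forall>al\<in>Gam. \<forall>be\<in>Gam. m a al (m b be c) = m b al (m a be c))"

definition gprod :: "('a \<Rightarrow> 'g \<Rightarrow> 'a \<Rightarrow> 'a) \<Rightarrow> 'a set \<Rightarrow> 'g set \<Rightarrow> 'a set \<Rightarrow> 'a set" where
  "gprod m A Gam B = {m a g b | a g b. a \<in> A \<and> g \<in> Gam \<and> b \<in> B}"

definition intra_regular :: "'a set \<Rightarrow> 'g set \<Rightarrow> ('a \<Rightarrow> 'g \<Rightarrow> 'a \<Rightarrow> 'a) \<Rightarrow> bool" where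
  "intra_regular S Gam m \<longleftrightarrow> (\<forall>a\<in>S. \<exists>x\<in>S. \<exists>y\<in>S. \<exists>be\<in>Gam. \<exists>ga\<in>Gam. \<exists>de\<in>Gam.
     a = m (m x be (m a de a)) ga y)"

definition right_gamma_ideal :: "'a set \<Rightarrow> 'g set \<Rightarrow> ('a \<Rightarrow> 'g \<Rightarrow> 'a \<Rightarrow> 'a) \<Rightarrow> 'a set \<Rightarrow> bool" where
  "right_gamma_ideal S Gam m R \<longleftrightarrow> R \<noteq> {} \<and> R \<subseteq> S \<and> gprod m R Gam S \<subseteq> R"

definition gamma_semiprime :: "'a set \<Rightarrow> 'g set \<Rightarrow> ('a \<Rightarrow> 'g \<Rightarrow> 'a \<Rightarrow> 'a) \<Rightarrow> 'a set \<Rightarrow> bool" where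
  "gamma_semiprime S Gam m P \<longleftrightarrow> (\<forall>a\<in>S. gprod m {a} Gam {a} \<subseteq> P \<longrightarrow> a \<in> P)"

end

theory Submission
  imports Defs
begin

(* Forward direction: if a = (x b (a d a)) g y, then the AG** laws let us
   rewrite a as a g t for some t, then a d a as (a g a) d (t g t), and finally
   x b (a d a) as (a g a) b s.  Hence a lies in every right ideal containing
   a Gam a, i.e. every right ideal is semiprime.

   Backward direction: for a in S the set  a Gam a  union  (a Gam a) Gam S  is a
   right ideal (again by the AG** laws).  It contains a Gam a, so by
   semiprimality it contains a, which gives a = (a d a) g s; this is turned
   into an intra-regularity witness for a. *)

locale gamma_AG =
  fixes S :: "'a set" and Gam :: "'g set" and m :: "'a \<Rightarrow> 'g \<Rightarrow> 'a \<Rightarrow> 'a"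
  assumes params_nonempty: "Gam \<noteq> {}"
    and closed: "\<And>x g y. x \<in> S \<Longrightarrow> g \<in> Gam \<Longrightarrow> y \<in> S \<Longrightarrow> m x g y \<in> S"
    and left_invertive: "\<And>x y z g d. x \<in> S \<Longrightarrow> y \<in> S \<Longrightarrow> z \<in> S \<Longrightarrow> g \<in> Gam \<Longrightarrow> d \<in> Gam \<Longrightarrow>
      m (m x g y) d z = m (m z g y) d x"
begin

lemma medial:
  assumes "p \<in> S" "q \<in> S" "c \<in> S" "e \<in> S" "g \<in> Gam" "d \<in> Gam" "al \<in> Gam"
  shows "m (m p g q) d (m c al e) = m (m p g c) d (m q al e)"
proof -
  have "m (m p g q) d (m c al e) = m (m (m c al e) g q) d p"
    by (rule left_invertive) (use assms closed in auto)
  also have "m (m c al e) g q = m (m q al e) g c"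
    by (rule left_invertive) (use assms in auto)
  also have "m (m (m q al e) g c) d p = m (m p g c) d (m q al e)"
    by (rule left_invertive) (use assms closed in auto)
  finally show ?thesis .
qed

end

locale gamma_AG2 = gamma_AG +
  assumes left_permutative: "\<And>a b c al be. a \<in> S \<Longrightarrow> b \<in> S \<Longrightarrow> c \<in> S \<Longrightarrow> al \<in> Gam \<Longrightarrow> be \<in> Gam \<Longrightarrow>
      m a al (m b be c) = m b al (m a be c)"

lemma gamma_AG2_groupoid_locale:
  assumes "gamma_AG2_groupoid S Gam m"
  shows "gamma_AG2 S Gam m"
  using assms unfolding gamma_AG2_groupoid_def gamma_AG_groupoid_def gamma_groupoid_def
  by unfold_locales blast+

context gamma_AG2
begin

definition intra_regular_elem :: "'a \<Rightarrow> bool" where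
  "intra_regular_elem a \<longleftrightarrow> (\<exists>x\<in>S. \<exists>y\<in>S. \<exists>be\<in>Gam. \<exists>ga\<in>Gam. \<exists>de\<in>Gam.
     a = m (m x be (m a de a)) ga y)"

lemma intra_regular_iff_elem: "intra_regular S Gam m \<longleftrightarrow> (\<forall>a\<in>S. intra_regular_elem a)"
  unfolding intra_regular_def intra_regular_elem_def ..

lemma intra_regular_right_absorb:
  assumes S: "a \<in> S" "x \<in> S" "y \<in> S" and G: "be \<in> Gam" "ga \<in> Gam" "de \<in> Gam"
    and a_eq: "a = m (m x be (m a de a)) ga y"
  shows "\<exists>t\<in>S. a = m a ga t"
proof -
  define u where "u = m x be (m a de a)"
  have uS: "u \<in> S" using S G by (simp add: u_def closed)
  have au: "a = m u ga y" using a_eq by (simp add: u_def)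
  have sq: "m a de a = m (m a ga y) de u"
  proof -
    have "m a de a = m (m u ga y) de a" by (simp only: au[symmetric])
    also have "\<dots> = m (m a ga y) de u" using S G uS by (simp add: left_invertive)
    finally show ?thesis .
  qed
  have u_eq: "u = m (m a ga y) be (m x de u)"
  proof -
    have "u = m x be (m (m a ga y) de u)" using u_def sq by simp
    also have "\<dots> = m (m a ga y) be (m x de u)" using S G uS by (simp add: left_permutative closed)
    finally show ?thesis .
  qed
  define p where "p = m y be (m x de u)"
  have pS: "p \<in> S" using S G uS by (simp add: p_def closed)
  have "a = m (m (m a ga y) be (m x de u)) ga y" using au u_eq by simp
  also have "\<dots> = m p ga (m a ga y)" using S G uS by (simp add: p_def left_invertive closed)
  also have "\<dots> = m a ga (m p ga y)" using S G pS by (simp add: left_permutative)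
  finally show ?thesis using S G pS by (blast intro: closed)
qed

text \<open>Forward direction, element-wise: with a = a g t the medial law gives
  a d a = (a g a) d (t g t), so x b (a d a) = (a g a) b (x d (t g t)) lies in R.\<close>

lemma intra_regular_elem_in_right_ideal:
  assumes R: "right_gamma_ideal S Gam m R" and aS: "a \<in> S"
    and sq: "gprod m {a} Gam {a} \<subseteq> R" and ir: "intra_regular_elem a"
  shows "a \<in> R"
proof -
  have R_closed: "\<And>r g s. r \<in> R \<Longrightarrow> g \<in> Gam \<Longrightarrow> s \<in> S \<Longrightarrow> m r g s \<in> R"
    using R unfolding right_gamma_ideal_def gprod_def by blast
  have sq_in: "\<And>g. g \<in> Gam \<Longrightarrow> m a g a \<in> R" using sq unfolding gprod_def by blast
  obtain x y be ga de where S: "x \<in> S" "y \<in> S" and G: "be \<in> Gam" "ga \<in> Gam" "de \<in> Gam"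
    and a_eq: "a = m (m x be (m a de a)) ga y"
    using ir unfolding intra_regular_elem_def by blast
  obtain t where tS: "t \<in> S" and a_t: "a = m a ga t"
    using intra_regular_right_absorb[OF aS S G a_eq] by blast
  have "m a de a = m (m a ga t) de (m a ga t)" by (simp only: a_t[symmetric])
  also have "\<dots> = m (m a ga a) de (m t ga t)" using aS tS G by (simp add: medial)
  finally have "m x be (m a de a) = m (m a ga a) be (m x de (m t ga t))"
    using aS S tS G by (simp add: left_permutative closed)
  hence "m x be (m a de a) \<in> R" using R_closed sq_in S G tS by (simp add: closed)
  thus "a \<in> R" using a_eq R_closed S G by metis
qed

definition square_ideal :: "'a \<Rightarrow> 'a set" where
  "square_ideal a = gprod m {a} Gam {a} \<union> gprod m (gprod m {a} Gam {a}) Gam S"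

lemma square_multiple_right:
  assumes "a \<in> S" "s \<in> S" "t \<in> S" "d \<in> Gam" "g \<in> Gam" "e \<in> Gam"
  shows "m (m (m a d a) g s) e t = m (m a g a) e (m s d t)"
proof -
  have "m (m (m a d a) g s) e t = m (m t g s) e (m a d a)"
    using assms by (simp add: left_invertive closed)
  also have "\<dots> = m a e (m (m t g s) d a)" using assms by (simp add: left_permutative closed)
  also have "m (m t g s) d a = m (m a g s) d t" using assms by (simp add: left_invertive)
  also have "m a e (m (m a g s) d t) = m (m a g s) e (m a d t)"
    using assms by (simp add: left_permutative closed)
  also have "\<dots> = m (m a g a) e (m s d t)" using assms by (simp add: medial)
  finally show ?thesis .
qed

lemma square_ideal_right_ideal:
  assumes aS: "a \<in> S"
  shows "right_gamma_ideal S Gam m (square_ideal a)"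
proof -
  have "square_ideal a \<subseteq> S" using aS by (auto simp: square_ideal_def gprod_def closed)
  moreover have "square_ideal a \<noteq> {}"
    using params_nonempty unfolding square_ideal_def gprod_def by blast
  moreover have "gprod m (square_ideal a) Gam S \<subseteq> square_ideal a"
  proof
    fix z assume "z \<in> gprod m (square_ideal a) Gam S"
    then obtain r e t where z: "z = m r e t" "r \<in> square_ideal a" "e \<in> Gam" "t \<in> S"
      unfolding gprod_def by blast
    from z(2) consider (sq) d where "d \<in> Gam" "r = m a d a"
      | (mult) d g s where "d \<in> Gam" "g \<in> Gam" "s \<in> S" "r = m (m a d a) g s"
      unfolding square_ideal_def gprod_def by blast
    then show "z \<in> square_ideal a"
    proof cases
      case sq
      then show ?thesis using z unfolding square_ideal_def gprod_def by blast
    next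
      case mult
      then have "z = m (m a g a) e (m s d t)" using z aS by (simp add: square_multiple_right)
      moreover have "m s d t \<in> S" using mult z by (simp add: closed)
      ultimately show ?thesis using mult z unfolding square_ideal_def gprod_def by blast
    qed
  qed
  ultimately show ?thesis unfolding right_gamma_ideal_def by blast
qed

text \<open>An element lying in the right ideal generated by its square is intra-regular:
  from a = (a d a) g s one gets a d a = (a g s) d (a d a), hence
  a = ((a g s) d (a d a)) g s.\<close>

lemma square_ideal_member_intra_regular:
  assumes aS: "a \<in> S" and a_in: "a \<in> square_ideal a"
  shows "intra_regular_elem a"
proof -
  obtain d g s where G: "d \<in> Gam" "g \<in> Gam" and sS: "s \<in> S" and a_eq: "a = m (m a d a) g s"
  proof -
    from a_in consider (sq) d where "d \<in> Gam" "a = m a d a"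
      | (mult) d g s where "d \<in> Gam" "g \<in> Gam" "s \<in> S" "a = m (m a d a) g s"
      by (auto simp: square_ideal_def gprod_def)
    then show thesis
    proof cases
      case sq
      then have "a = m (m a d a) d a" by simp
      then show thesis using that sq aS by blast
    qed (use that in blast)
  qed
  have "m a d a = m (m (m a d a) g s) d a" by (simp only: a_eq[symmetric])
  also have "\<dots> = m (m a g s) d (m a d a)" using aS sS G by (simp add: left_invertive closed)
  finally have "a = m (m (m a g s) d (m a d a)) g s" using a_eq by simp
  moreover have "m a g s \<in> S" using aS sS G by (simp add: closed)
  ultimately show ?thesis unfolding intra_regular_elem_def using sS G by blast
qed

end

theorem mainTheorem15:
  fixes S :: "'a set" and Gam :: "'g set" and m :: "'a \<Rightarrow> 'g \<Rightarrow> 'a \<Rightarrow> 'a"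
  assumes "gamma_AG2_groupoid S Gam m"
  shows "intra_regular S Gam m \<longleftrightarrow>
         (\<forall>R. right_gamma_ideal S Gam m R \<longrightarrow> gamma_semiprime S Gam m R)"
proof -
  interpret gamma_AG2 S Gam m using assms by (rule gamma_AG2_groupoid_locale)
  show ?thesis
  proof
    assume "intra_regular S Gam m"
    then show "\<forall>R. right_gamma_ideal S Gam m R \<longrightarrow> gamma_semiprime S Gam m R"
      unfolding intra_regular_iff_elem gamma_semiprime_def
      by (blast intro: intra_regular_elem_in_right_ideal)
  next
    assume semiprime: "\<forall>R. right_gamma_ideal S Gam m R \<longrightarrow> gamma_semiprime S Gam m R"
    have "intra_regular_elem a" if aS: "a \<in> S" for a
    proof -
      have "gamma_semiprime S Gam m (square_ideal a)"
        using semiprime square_ideal_right_ideal[OF aS] by blast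
      moreover have "gprod m {a} Gam {a} \<subseteq> square_ideal a" by (simp add: square_ideal_def)
      ultimately have "a \<in> square_ideal a" using aS unfolding gamma_semiprime_def by blast
      then show ?thesis by (rule square_ideal_member_intra_regular[OF aS])
    qed
    then show "intra_regular S Gam m" by (simp add: intra_regular_iff_elem)
  qed
qed

end
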